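(* Let $f:\mathbb{R}^d\to\mathbb{R}$ be twice differentiable with $L$-Lipschitz Hessian. Let $x,g\in\mathbb{R}^d$, $H\in\mathbb{R}^{d\times d}$ symmetric, $M\ge L$, let $x^+$ be a global minimizer of $y\mapsto\Omega_{M,g,H}(y,x)$ and $r:=\|x^+-x\|$. Then $$ \frac{\bigl(-\lambda_{\min}(\nabla^2 f(x^+))\bigr)^3}{M^2}\;\le\;14Mr^3+\frac{4}{M^2}\|\nabla^2 f(x)-H\|^3 . $$
   Context: $\|\cdot\|$ is the Euclidean norm on vectors and the spectral norm on symmetric matrices; $\lambda_{\min}$ denotes the smallest eigenvalue. The Hessian of $f$ is $L$-Lipschitz means $\|\nabla^2 f(x)-\nabla^2 f(y)\|\le L\|x-y\|$ for all $x,y$. For $M>0$, $g\in\mathbb{R}^d$ and symmetric $H$, $\Omega_{M,g,H}(y,x):=\langle g,y-x\rangle+\frac12\langle H(y-x),y-x\rangle+\frac{M}{6}\|y-x\|^3$. *)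

theory Defs
  imports "HOL-Analysis.Analysis"
begin

definition spec_norm :: "real^'n^'n \<Rightarrow> real" where
  "spec_norm A = onorm (\<lambda>v. A *v v)"

definition eigenvalues :: "real^'n^'n \<Rightarrow> real set" where
  "eigenvalues A = {lam. \<exists>v. v \<noteq> 0 \<and> A *v v = lam *\<^sub>R v}"

definition lambda_min :: "real^'n^'n \<Rightarrow> real" where
  "lambda_min A = Min (eigenvalues A)"

definition twice_diff_with :: "(real^'n \<Rightarrow> real) \<Rightarrow> (real^'n \<Rightarrow> real^'n) \<Rightarrow> (real^'n \<Rightarrow> real^'n^'n) \<Rightarrow> bool" where
  "twice_diff_with f Df Hf \<longleftrightarrow>
     (\<forall>x. (f has_derivative (\<lambda>h. Df x \<bullet> h)) (at x)) \<and>
     (\<forall>x. (Df has_derivative (\<lambda>h. Hf x *v h)) (at x))"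

definition hessian_lipschitz :: "(real^'n \<Rightarrow> real^'n^'n) \<Rightarrow> real \<Rightarrow> bool" where
  "hessian_lipschitz Hf L \<longleftrightarrow> (\<forall>x y. spec_norm (Hf x - Hf y) \<le> L * norm (x - y))"

definition Omega :: "real \<Rightarrow> real^'n \<Rightarrow> real^'n^'n \<Rightarrow> real^'n \<Rightarrow> real^'n \<Rightarrow> real" where
  "Omega M g H y x = g \<bullet> (y - x) + (1/2) * ((H *v (y - x)) \<bullet> (y - x)) + (M / 6) * norm (y - x) ^ 3"

end

theory Submission
  imports Defs
begin

text \<open>
  Write \<open>h = x\<^sup>+ - x\<close> and \<open>r = \<parallel>h\<parallel>\<close>.  Minimality of \<open>h\<close> for the cubic model forces
  \<open>H + (M/2) r I\<close> to be positive semidefinite: on the sphere \<open>\<parallel>h + d\<parallel> = r\<close> the cubic term is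
  constant, so by the first-order condition the model exceeds its minimum there by
  \<open>\<langle>(H + (M/2) r I) d, d\<rangle>/2\<close>; directions tangent to the sphere follow by continuity.  Passing from
  \<open>H\<close> to \<open>\<nabla>\<^sup>2f(x\<^sup>+)\<close> costs at most \<open>\<parallel>\<nabla>\<^sup>2f(x) - H\<parallel> + L r\<close>, so
  \<open>-\<lambda>\<^sub>m\<^sub>i\<^sub>n(\<nabla>\<^sup>2f(x\<^sup>+)) \<le> (3/2) M r + \<parallel>\<nabla>\<^sup>2f(x) - H\<parallel>\<close>, and cubing with \<open>(a + b)\<^sup>3 \<le> 4(a\<^sup>3 + b\<^sup>3)\<close> gives
  the bound.  Symmetry of the Hessian (Schwarz's theorem) is what makes \<open>\<lambda>\<^sub>m\<^sub>i\<^sub>n\<close> an actual eigenvalue.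
\<close>

lemma has_real_derivative_along_line:
  assumes "\<forall>y. (f has_derivative (\<lambda>h. Df y \<bullet> h)) (at y)"
  shows "((\<lambda>s. f (a + s *\<^sub>R u)) has_real_derivative (Df (a + s *\<^sub>R u) \<bullet> u)) (at s)"
proof -
  have line: "((\<lambda>s. a + s *\<^sub>R u) has_derivative (\<lambda>h. h *\<^sub>R u)) (at s)"
    by (auto intro!: derivative_eq_intros)
  have "((\<lambda>s. f (a + s *\<^sub>R u)) has_derivative (\<lambda>h. Df (a + s *\<^sub>R u) \<bullet> (h *\<^sub>R u))) (at s)"
    using has_derivative_compose[OF line assms[rule_format, of "a + s *\<^sub>R u"]] by (simp add: o_def)
  then show ?thesis unfolding has_field_derivative_def
    by (rule has_derivative_eq_rhs) (auto simp: fun_eq_iff)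
qed

definition second_difference :: "('a::real_vector \<Rightarrow> real) \<Rightarrow> 'a \<Rightarrow> real \<Rightarrow> 'a \<Rightarrow> 'a \<Rightarrow> real" where
  "second_difference f x t u v = f (x + t *\<^sub>R u + t *\<^sub>R v) - f (x + t *\<^sub>R u) - f (x + t *\<^sub>R v) + f x"

lemma second_difference_commute: "second_difference f x t u v = second_difference f x t v u"
  by (simp add: second_difference_def algebra_simps)

lemma second_difference_mean_value:
  assumes fd: "\<forall>y. (f has_derivative (\<lambda>h. Df y \<bullet> h)) (at y)" and "0 < t"
  obtains z where "0 < z" "z < t"
    and "second_difference f x t u v = t * ((Df (x + t *\<^sub>R v + z *\<^sub>R u) - Df (x + z *\<^sub>R u)) \<bullet> u)"
proof -
  define \<phi> where "\<phi> s = f (x + t *\<^sub>R v + s *\<^sub>R u) - f (x + s *\<^sub>R u)" for s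
  define \<phi>' where "\<phi>' s = (Df (x + t *\<^sub>R v + s *\<^sub>R u) - Df (x + s *\<^sub>R u)) \<bullet> u" for s
  have "(\<phi> has_real_derivative \<phi>' s) (at s)" for s
    unfolding \<phi>_def \<phi>'_def inner_diff_left
    by (auto intro!: derivative_eq_intros has_real_derivative_along_line[OF fd])
  then obtain z where "0 < z" "z < t" and "\<phi> t - \<phi> 0 = (t - 0) * \<phi>' z"
    using MVT2[OF \<open>0 < t\<close>, of \<phi> \<phi>'] by blast
  moreover have "\<phi> t - \<phi> 0 = second_difference f x t u v"
    unfolding \<phi>_def second_difference_def by (simp add: algebra_simps)
  ultimately show ?thesis using that unfolding \<phi>'_def by simp
qed

lemma second_difference_estimate:
  fixes A :: "real^'n^'n"
  assumes fd: "\<forall>y. (f has_derivative (\<lambda>h. Df y \<bullet> h)) (at y)" and "0 < t" and "0 \<le> e"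
    and R: "\<forall>y. norm (y - x) < d \<longrightarrow> norm (Df y - Df x - A *v (y - x)) \<le> e * norm (y - x)"
    and td: "t * (norm u + norm v) < d"
  shows "\<bar>second_difference f x t u v - t ^ 2 * ((A *v v) \<bullet> u)\<bar> \<le> 2 * e * t ^ 2 * (norm u + norm v) * norm u"
proof -
  obtain z where z: "0 < z" "z < t"
    and mv: "second_difference f x t u v = t * ((Df (x + t *\<^sub>R v + z *\<^sub>R u) - Df (x + z *\<^sub>R u)) \<bullet> u)"
    using second_difference_mean_value[OF fd \<open>0 < t\<close>] .
  define \<rho> where "\<rho> y = Df y - Df x - A *v (y - x)" for y
  define y1 where "y1 = x + t *\<^sub>R v + z *\<^sub>R u"
  define y2 where "y2 = x + z *\<^sub>R u"
  have near: "norm (y - x) \<le> t * (norm u + norm v) \<Longrightarrow> norm (\<rho> y) \<le> e * (t * (norm u + norm v))" for y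
    using R td \<open>0 \<le> e\<close> unfolding \<rho>_def by (meson le_less_trans mult_left_mono order_trans)
  have "norm (y1 - x) \<le> z * norm u + t * norm v"
    unfolding y1_def using norm_triangle_ineq[of "z *\<^sub>R u" "t *\<^sub>R v"] z by (simp add: add.commute)
  also have "\<dots> \<le> t * (norm u + norm v)" using z by (simp add: algebra_simps mult_right_mono)
  finally have \<rho>1: "norm (\<rho> y1) \<le> e * (t * (norm u + norm v))" by (rule near)
  have "norm (y2 - x) \<le> t * (norm u + norm v)"
    unfolding y2_def using z by (simp add: distrib_left add_increasing2 mult_right_mono)
  then have \<rho>2: "norm (\<rho> y2) \<le> e * (t * (norm u + norm v))" by (rule near)
  have "second_difference f x t u v - t ^ 2 * ((A *v v) \<bullet> u) = t * ((\<rho> y1 - \<rho> y2) \<bullet> u)"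
    unfolding mv \<rho>_def y1_def y2_def
    by (simp add: matrix_vector_right_distrib matrix_vector_mult_diff_distrib inner_diff_left inner_add_left
        matrix_vector_mult_scaleR algebra_simps power2_eq_square)
  also have "\<bar>\<dots>\<bar> \<le> t * (norm (\<rho> y1 - \<rho> y2) * norm u)"
    using \<open>0 < t\<close> Cauchy_Schwarz_ineq2 by (simp add: abs_mult)
  also have "\<dots> \<le> t * ((e * (t * (norm u + norm v)) + e * (t * (norm u + norm v))) * norm u)"
    using \<open>0 < t\<close> by (intro mult_left_mono mult_right_mono order_trans[OF norm_triangle_ineq4] add_mono \<rho>1 \<rho>2) auto
  finally show ?thesis by (simp add: algebra_simps power2_eq_square)
qed

lemma second_difference_tendsto:
  assumes tw: "twice_diff_with f Df Hf"
  shows "((\<lambda>t. second_difference f x t u v / t ^ 2) \<longlongrightarrow> (Hf x *v v) \<bullet> u) (at_right 0)"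
proof (rule tendstoI)
  fix \<epsilon> :: real assume "0 < \<epsilon>"
  define C where "C = 2 * (norm u + norm v) * norm u + 1"
  have "0 < C" unfolding C_def by (simp add: add_nonneg_pos)
  define e where "e = \<epsilon> / (2 * C)"
  have "0 < e" unfolding e_def using \<open>0 < \<epsilon>\<close> \<open>0 < C\<close> by simp
  have fd: "\<forall>y. (f has_derivative (\<lambda>h. Df y \<bullet> h)) (at y)"
    and "(Df has_derivative (\<lambda>h. Hf x *v h)) (at x)" using tw unfolding twice_diff_with_def by blast+
  then obtain d where "0 < d"
    and R: "\<forall>y. norm (y - x) < d \<longrightarrow> norm (Df y - Df x - Hf x *v (y - x)) \<le> e * norm (y - x)"
    unfolding has_derivative_at_alt using \<open>0 < e\<close> by blast
  define b where "b = d / (norm u + norm v + 1)"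
  have "0 < b" unfolding b_def using \<open>0 < d\<close> by (simp add: add_nonneg_pos)
  have "dist (second_difference f x t u v / t ^ 2) ((Hf x *v v) \<bullet> u) < \<epsilon>" if "0 < t" "t < b" for t
  proof -
    have "t * (norm u + norm v) < t * (norm u + norm v + 1)" using \<open>0 < t\<close> by simp
    also have "\<dots> < d"
      using \<open>t < b\<close> unfolding b_def by (simp add: pos_less_divide_eq add_nonneg_pos)
    finally have "\<bar>second_difference f x t u v - t ^ 2 * ((Hf x *v v) \<bullet> u)\<bar> \<le> t ^ 2 * (e * (C - 1))"
      using second_difference_estimate[OF fd \<open>0 < t\<close> _ R] \<open>0 < e\<close> unfolding C_def by (simp add: algebra_simps)
    then have "dist (second_difference f x t u v / t ^ 2) ((Hf x *v v) \<bullet> u) \<le> e * (C - 1)"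
      using \<open>0 < t\<close> by (simp add: dist_real_def field_simps abs_div)
    also have "\<dots> < \<epsilon>"
      unfolding e_def using \<open>0 < \<epsilon>\<close> \<open>0 < C\<close> by (simp add: field_simps) (simp add: add_pos_pos)
    finally show ?thesis .
  qed
  then show "\<forall>\<^sub>F t in at_right 0. dist (second_difference f x t u v / t ^ 2) ((Hf x *v v) \<bullet> u) < \<epsilon>"
    unfolding eventually_at_right[OF \<open>0 < b\<close>] using \<open>0 < b\<close> by blast
qed

lemma hessian_symmetric:
  assumes "twice_diff_with f Df Hf"
  shows "(Hf x *v u) \<bullet> v = (Hf x *v v) \<bullet> u"
  using tendsto_unique[OF trivial_limit_at_right_real second_difference_tendsto[OF assms, of x v u]
      second_difference_tendsto[OF assms, of x u v, unfolded second_difference_commute[of f x _ u v]]] .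

lemma inner_matrix_symmetric:
  fixes A :: "real^'n^'n"
  assumes "transpose A = A"
  shows "(A *v u) \<bullet> v = (A *v v) \<bullet> u"
proof -
  have "(A *v u) \<bullet> v = u \<bullet> (transpose A *v v)"
    by (metis dot_lmul_matrix vector_transpose_matrix)
  then show ?thesis using assms by (simp add: inner_commute)
qed

lemma quadratic_form_add_scaleR:
  fixes A :: "real^'n^'n"
  shows "(A *v (a + s *\<^sub>R b)) \<bullet> (a + s *\<^sub>R b)
           = (A *v a) \<bullet> a + s * ((A *v a) \<bullet> b + (A *v b) \<bullet> a) + s ^ 2 * ((A *v b) \<bullet> b)"
  by (simp add: matrix_vector_right_distrib matrix_vector_mult_scaleR inner_add_left inner_add_right
      algebra_simps power2_eq_square)

lemma power2_norm_add_scaleR: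
  fixes a b :: "'a::real_inner"
  shows "norm (a + s *\<^sub>R b) ^ 2 = norm a ^ 2 + s * (2 * (a \<bullet> b)) + s ^ 2 * norm b ^ 2"
  unfolding power2_norm_eq_inner
  by (simp add: inner_add_left inner_add_right inner_commute algebra_simps power2_eq_square)

lemma abs_quadratic_form_le_spec_norm:
  fixes C :: "real^'n^'n"
  shows "\<bar>(C *v w) \<bullet> w\<bar> \<le> spec_norm C * norm w ^ 2"
proof -
  have "\<bar>(C *v w) \<bullet> w\<bar> \<le> norm (C *v w) * norm w" by (rule Cauchy_Schwarz_ineq2)
  also have "\<dots> \<le> (spec_norm C * norm w) * norm w" unfolding spec_norm_def
    by (intro mult_right_mono onorm[OF matrix_vector_mul_bounded_linear]) simp
  finally show ?thesis by (simp add: power2_eq_square mult.assoc)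
qed

lemma spec_norm_nonneg: "0 \<le> spec_norm (A :: real^'n^'n)"
  unfolding spec_norm_def by (rule onorm_pos_le[OF matrix_vector_mul_bounded_linear])

lemma finite_eigenvalues_symmetric:
  fixes A :: "real^'n^'n"
  assumes sym: "\<And>u v. (A *v u) \<bullet> v = (A *v v) \<bullet> u"
  shows "finite (eigenvalues A)"
proof -
  let ?E = "eigenvalues A"
  define ev where "ev l = (SOME v. v \<noteq> 0 \<and> A *v v = l *\<^sub>R v)" for l
  have ev: "ev l \<noteq> 0 \<and> A *v ev l = l *\<^sub>R ev l" if "l \<in> ?E" for l
    using that unfolding eigenvalues_def ev_def by (metis (mono_tags, lifting) mem_Collect_eq someI)
  have orth: "ev l1 \<bullet> ev l2 = 0" if "l1 \<in> ?E" "l2 \<in> ?E" "l1 \<noteq> l2" for l1 l2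
  proof -
    have "l1 * (ev l1 \<bullet> ev l2) = (A *v ev l1) \<bullet> ev l2" using ev[OF that(1)] by simp
    also have "\<dots> = (A *v ev l2) \<bullet> ev l1" by (rule sym)
    also have "\<dots> = l2 * (ev l1 \<bullet> ev l2)" using ev[OF that(2)] by (simp add: inner_commute)
    finally have "(l1 - l2) * (ev l1 \<bullet> ev l2) = 0" by (simp add: algebra_simps)
    then show ?thesis using that(3) by simp
  qed
  have inj: "inj_on ev ?E"
  proof (rule inj_onI)
    fix l1 l2 assume l: "l1 \<in> ?E" "l2 \<in> ?E" "ev l1 = ev l2"
    then have "l1 *\<^sub>R ev l1 = l2 *\<^sub>R ev l1" using ev[OF l(1)] ev[OF l(2)] by metis
    then show "l1 = l2" using ev[OF l(1)] by (simp add: scaleR_cancel_right)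
  qed
  have "pairwise orthogonal (ev ` ?E)"
    unfolding pairwise_def orthogonal_def using orth by auto
  moreover have "0 \<notin> ev ` ?E" using ev by force
  ultimately have "finite (ev ` ?E)" by (intro finiteI_independent pairwise_orthogonal_independent)
  then show ?thesis using inj by (rule finite_imageD)
qed

lemma eigenvector_of_rayleigh_minimizer:
  fixes A :: "real^'n^'n"
  assumes sym: "\<And>u v. (A *v u) \<bullet> v = (A *v v) \<bullet> u"
    and lower: "\<And>w. c * (w \<bullet> w) \<le> (A *v w) \<bullet> w"
    and attained: "(A *v v) \<bullet> v = c * (v \<bullet> v)"
  shows "A *v v = c *\<^sub>R v"
proof -
  define b where "b = A *v v - c *\<^sub>R v"
  define K where "K = (A *v b) \<bullet> b - c * (b \<bullet> b)"
  define \<phi> where "\<phi> t = (A *v (v + t *\<^sub>R b)) \<bullet> (v + t *\<^sub>R b) - c * ((v + t *\<^sub>R b) \<bullet> (v + t *\<^sub>R b))" for t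
  have "(A *v v) \<bullet> b + (A *v b) \<bullet> v - 2 * c * (v \<bullet> b) = 2 * (b \<bullet> b)"
    using sym[of b v] unfolding b_def by (simp add: inner_diff_left inner_commute)
  then have \<phi>_eq: "\<phi> = (\<lambda>t. t * (2 * (b \<bullet> b)) + t ^ 2 * K)"
    using attained unfolding \<phi>_def K_def quadratic_form_add_scaleR fun_eq_iff
    by (simp add: inner_add_left inner_add_right inner_commute algebra_simps power2_eq_square)
  have "(\<phi> has_real_derivative 2 * (b \<bullet> b)) (at 0)"
    unfolding \<phi>_eq by (auto intro!: derivative_eq_intros)
  moreover have "\<phi> 0 \<le> \<phi> t" for t
    using lower[of "v + t *\<^sub>R b"] unfolding \<phi>_def by (simp add: attained)
  ultimately have "2 * (b \<bullet> b) = 0" by (intro DERIV_local_min[of \<phi> _ 0 1]) auto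
  then show ?thesis unfolding b_def by simp
qed

lemma eigenvalues_nonempty_symmetric:
  fixes A :: "real^'n^'n"
  assumes sym: "\<And>u v. (A *v u) \<bullet> v = (A *v v) \<bullet> u"
  shows "eigenvalues A \<noteq> {}"
proof -
  let ?S = "sphere (0::real^'n) 1"
  have "axis undefined 1 \<in> ?S" by (simp add: norm_axis_1)
  moreover have "continuous_on ?S (\<lambda>w. (A *v w) \<bullet> w)"
    by (intro continuous_intros linear_continuous_on matrix_vector_mul_bounded_linear)
  ultimately obtain v where v: "v \<in> ?S" and vmin: "\<And>w. w \<in> ?S \<Longrightarrow> (A *v v) \<bullet> v \<le> (A *v w) \<bullet> w"
    using continuous_attains_inf[OF compact_sphere] by blast
  define c where "c = (A *v v) \<bullet> v"
  have vv: "v \<bullet> v = 1" using v by (simp add: dot_square_norm)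
  have lower: "c * (w \<bullet> w) \<le> (A *v w) \<bullet> w" for w
  proof (cases "w = 0")
    case False
    then have "c \<le> (A *v ((1 / norm w) *\<^sub>R w)) \<bullet> ((1 / norm w) *\<^sub>R w)"
      unfolding c_def by (intro vmin) simp
    also have "\<dots> = ((A *v w) \<bullet> w) / (w \<bullet> w)"
      by (simp add: matrix_vector_mult_scaleR power2_norm_eq_inner[symmetric] power2_eq_square)
    finally show ?thesis using False by (simp add: field_simps)
  qed simp
  have "A *v v = c *\<^sub>R v"
    by (rule eigenvector_of_rayleigh_minimizer[OF sym lower]) (simp add: c_def vv)
  moreover have "v \<noteq> 0" using v by auto
  ultimately show ?thesis unfolding eigenvalues_def by blast
qed

lemma lambda_min_ge:
  fixes A :: "real^'n^'n"
  assumes sym: "\<And>u v. (A *v u) \<bullet> v = (A *v v) \<bullet> u"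
    and lower: "\<And>w. c * norm w ^ 2 \<le> (A *v w) \<bullet> w"
  shows "c \<le> lambda_min A"
proof -
  have "lambda_min A \<in> eigenvalues A"
    unfolding lambda_min_def
    using finite_eigenvalues_symmetric[OF sym] eigenvalues_nonempty_symmetric[OF sym] by (rule Min_in)
  then obtain v where v: "v \<noteq> 0" "A *v v = lambda_min A *\<^sub>R v" unfolding eigenvalues_def by blast
  have "c * norm v ^ 2 \<le> lambda_min A * norm v ^ 2"
    using lower[of v] v(2) by (simp add: power2_norm_eq_inner)
  then show ?thesis using v(1) by simp
qed

definition cubic_model :: "real^'n \<Rightarrow> real^'n^'n \<Rightarrow> real \<Rightarrow> real^'n \<Rightarrow> real" where
  "cubic_model g H M h = g \<bullet> h + 1/2 * ((H *v h) \<bullet> h) + M/6 * norm h ^ 3"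

lemma Omega_eq_cubic_model: "Omega M g H y x = cubic_model g H M (y - x)"
  by (simp add: Omega_def cubic_model_def)

lemma has_real_derivative_norm_cube:
  fixes h w :: "'a::real_inner"
  assumes "h \<noteq> 0"
  shows "((\<lambda>s. norm (h + s *\<^sub>R w) ^ 3) has_real_derivative 3 * norm h * (h \<bullet> w)) (at 0)"
proof -
  have "((\<lambda>s. h + s *\<^sub>R w) has_derivative (\<lambda>s. s *\<^sub>R w)) (at 0)"
    by (auto intro!: derivative_eq_intros)
  from has_derivative_compose[OF this has_derivative_norm[of "h + 0 *\<^sub>R w"]] assms
  have "((\<lambda>s. norm (h + s *\<^sub>R w)) has_real_derivative w \<bullet> sgn h) (at 0)"
    unfolding has_field_derivative_def
    by (simp add: o_def) (erule has_derivative_eq_rhs, simp add: fun_eq_iff)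
  from DERIV_power[OF this, of 3] show ?thesis
    using assms by (simp add: sgn_div_norm inner_commute field_simps power2_eq_square)
qed

lemma cubic_model_first_order:
  fixes H :: "real^'n^'n"
  assumes sym: "\<And>u v. (H *v u) \<bullet> v = (H *v v) \<bullet> u"
    and min: "\<And>d. cubic_model g H M h \<le> cubic_model g H M d"
    and "h \<noteq> 0"
  shows "g \<bullet> v + (H *v h) \<bullet> v + M/2 * norm h * (h \<bullet> v) = 0"
proof -
  define cube where "cube s = norm (h + s *\<^sub>R v) ^ 3" for s
  have line: "(\<lambda>s. cubic_model g H M (h + s *\<^sub>R v))
      = (\<lambda>s. g \<bullet> h + s * (g \<bullet> v) + 1/2 * ((H *v h) \<bullet> h + s * ((H *v h) \<bullet> v + (H *v v) \<bullet> h)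
               + s ^ 2 * ((H *v v) \<bullet> v)) + M/6 * cube s)"
    unfolding cubic_model_def quadratic_form_add_scaleR cube_def by (simp add: inner_add_right)
  have cube: "(cube has_real_derivative 3 * norm h * (h \<bullet> v)) (at 0)"
    unfolding cube_def using \<open>h \<noteq> 0\<close> by (rule has_real_derivative_norm_cube)
  have "((\<lambda>s. cubic_model g H M (h + s *\<^sub>R v)) has_real_derivative
      g \<bullet> v + 1/2 * ((H *v h) \<bullet> v + (H *v v) \<bullet> h) + M/6 * (3 * norm h * (h \<bullet> v))) (at 0)"
    unfolding line by (auto intro!: derivative_eq_intros cube)
  then have "g \<bullet> v + 1/2 * ((H *v h) \<bullet> v + (H *v v) \<bullet> h) + M/6 * (3 * norm h * (h \<bullet> v)) = 0"
    by (rule DERIV_local_min[of _ _ 0 1]) (auto intro: min)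
  then show ?thesis using sym[of v h] by (simp add: algebra_simps)
qed

lemma cubic_model_min_on_sphere:
  fixes H :: "real^'n^'n"
  assumes sym: "\<And>u v. (H *v u) \<bullet> v = (H *v v) \<bullet> u"
    and min: "\<And>d. cubic_model g H M h \<le> cubic_model g H M d"
    and "h \<noteq> 0" and sphere: "norm (h + d) = norm h"
  shows "0 \<le> (H *v d) \<bullet> d + M/2 * norm h * norm d ^ 2"
proof -
  have increase: "cubic_model g H M (h + d) - cubic_model g H M h
      = g \<bullet> d + (H *v h) \<bullet> d + 1/2 * ((H *v d) \<bullet> d)"
    using quadratic_form_add_scaleR[of H h 1 d] sym[of d h] sphere unfolding cubic_model_def
    by (simp add: inner_add_right algebra_simps)
  have "h \<bullet> d = - (norm d ^ 2) / 2"
    using power2_norm_add_scaleR[of h 1 d] sphere by simp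
  with increase min[of "h + d"] cubic_model_first_order[OF sym min \<open>h \<noteq> 0\<close>, of d]
  show ?thesis by (simp add: algebra_simps)
qed

lemma quadratic_form_nonneg_if_nonneg_on_sphere:
  fixes A :: "real^'n^'n"
  assumes "h \<noteq> 0"
    and sphere: "\<And>d. norm (h + d) = norm h \<Longrightarrow> 0 \<le> (A *v d) \<bullet> d + c * norm d ^ 2"
  shows "0 \<le> (A *v w) \<bullet> w + c * norm w ^ 2"
proof -
  let ?Q = "\<lambda>w. (A *v w) \<bullet> w + c * norm w ^ 2"
  \<comment> \<open>a direction not orthogonal to \<open>h\<close> meets the sphere again at \<open>h + t v\<close>, \<open>t = -2 (h \<bullet> v)/\<parallel>v\<parallel>\<^sup>2\<close>\<close>
  have transversal: "0 \<le> ?Q v" if hv: "h \<bullet> v \<noteq> 0" for v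
  proof -
    have vv: "v \<bullet> v > 0" using hv by auto
    define t where "t = - 2 * (h \<bullet> v) / (v \<bullet> v)"
    have "t \<noteq> 0" unfolding t_def using hv vv by simp
    have "t * (2 * (h \<bullet> v)) + t ^ 2 * norm v ^ 2 = 0"
      unfolding t_def power2_norm_eq_inner using vv by (simp add: field_simps power2_eq_square)
    then have "norm (h + t *\<^sub>R v) ^ 2 = norm h ^ 2" by (simp add: power2_norm_add_scaleR)
    then have "norm (h + t *\<^sub>R v) = norm h" by (simp add: power2_eq_iff_nonneg)
    from sphere[OF this] have "0 \<le> t ^ 2 * ?Q v"
      by (simp add: matrix_vector_mult_scaleR power_mult_distrib algebra_simps power2_eq_square)
    then show ?thesis using \<open>t \<noteq> 0\<close> by (simp add: zero_le_mult_iff)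
  qed
  show ?thesis
  proof (cases "h \<bullet> w = 0")
    case False
    then show ?thesis by (rule transversal)
  next
    case True
    have "((\<lambda>e. ?Q (w + e *\<^sub>R h)) \<longlongrightarrow> ?Q (w + 0 *\<^sub>R h)) (at_right 0)"
      unfolding quadratic_form_add_scaleR power2_norm_add_scaleR by (intro tendsto_intros)
    moreover have "\<forall>\<^sub>F e in at_right 0. 0 \<le> ?Q (w + e *\<^sub>R h)"
    proof (rule eventually_mono[OF eventually_at_right_less])
      fix e :: real assume "0 < e"
      then have "h \<bullet> (w + e *\<^sub>R h) \<noteq> 0" using True \<open>h \<noteq> 0\<close> by (simp add: inner_add_right)
      then show "0 \<le> ?Q (w + e *\<^sub>R h)" by (rule transversal)
    qed
    ultimately have "0 \<le> ?Q (w + 0 *\<^sub>R h)" by (rule tendsto_lowerbound) simp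
    then show ?thesis by simp
  qed
qed

lemma cubic_model_min_at_zero:
  fixes H :: "real^'n^'n"
  assumes min: "\<And>d. cubic_model g H M 0 \<le> cubic_model g H M d"
  shows "0 \<le> (H *v w) \<bullet> w"
proof -
  let ?q = "(H *v w) \<bullet> w"
  \<comment> \<open>comparing the model at \<open>\<plusminus>s w\<close> cancels the linear term\<close>
  have bound: "- (M/3) * s * norm w ^ 3 \<le> ?q" if "s > 0" for s
  proof -
    have "0 \<le> s * (g \<bullet> w) + 1/2 * s ^ 2 * ?q + M/6 * s ^ 3 * norm w ^ 3"
      using min[of "s *\<^sub>R w"] \<open>s > 0\<close>
      by (simp add: cubic_model_def matrix_vector_mult_scaleR power2_eq_square power_mult_distrib)
    moreover have "0 \<le> - s * (g \<bullet> w) + 1/2 * s ^ 2 * ?q + M/6 * s ^ 3 * norm w ^ 3"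
      using min[of "(-s) *\<^sub>R w"] \<open>s > 0\<close>
      by (simp add: cubic_model_def vec.neg matrix_vector_mult_scaleR power2_eq_square power_mult_distrib)
    ultimately have "0 \<le> s ^ 2 * (?q + M/3 * s * norm w ^ 3)"
      by (simp add: algebra_simps power2_eq_square power3_eq_cube)
    then show ?thesis using \<open>s > 0\<close> by (simp add: zero_le_mult_iff)
  qed
  have "((\<lambda>s. - (M/3) * s * norm w ^ 3) \<longlongrightarrow> - (M/3) * 0 * norm w ^ 3) (at_right 0)"
    by (intro tendsto_intros)
  moreover have "\<forall>\<^sub>F s in at_right 0. - (M/3) * s * norm w ^ 3 \<le> ?q"
    by (rule eventually_mono[OF eventually_at_right_less]) (rule bound)
  ultimately have "- (M/3) * 0 * norm w ^ 3 \<le> ?q" by (rule tendsto_upperbound) simp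
  then show ?thesis by simp
qed

lemma cubic_model_minimizer_second_order:
  fixes H :: "real^'n^'n"
  assumes sym: "\<And>u v. (H *v u) \<bullet> v = (H *v v) \<bullet> u"
    and min: "\<And>d. cubic_model g H M h \<le> cubic_model g H M d"
  shows "0 \<le> (H *v w) \<bullet> w + M/2 * norm h * norm w ^ 2"
proof (cases "h = 0")
  case True
  then show ?thesis using cubic_model_min_at_zero[of g H M w] min by simp
next
  case False
  then show ?thesis
    by (rule quadratic_form_nonneg_if_nonneg_on_sphere) (rule cubic_model_min_on_sphere[OF sym min False])
qed

lemma power3_add_le:
  fixes p q :: real
  assumes "0 \<le> p" "0 \<le> q"
  shows "(p + q) ^ 3 \<le> 4 * (p ^ 3 + q ^ 3)"
proof -
  have "0 \<le> (p + q) * (p - q) ^ 2" using assms by simp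
  then show ?thesis by (simp add: power2_eq_square power3_eq_cube algebra_simps)
qed

lemma cube_div_square_le:
  fixes y a b M :: real
  assumes "0 \<le> a" "0 \<le> b" "0 < M" and y: "y \<le> 3/2 * M * a + b"
  shows "y ^ 3 / M ^ 2 \<le> 14 * M * a ^ 3 + 4 / M ^ 2 * b ^ 3"
proof -
  have "y ^ 3 \<le> (3/2 * M * a + b) ^ 3" by (rule power_mono_odd) (use y in auto)
  also have "\<dots> \<le> 4 * ((3/2 * M * a) ^ 3 + b ^ 3)" by (rule power3_add_le) (use assms in auto)
  also have "\<dots> = 27/2 * M ^ 3 * a ^ 3 + 4 * b ^ 3" by (simp add: power3_eq_cube field_simps)
  also have "\<dots> \<le> 14 * M ^ 3 * a ^ 3 + 4 * b ^ 3" using assms by (intro add_right_mono mult_right_mono) auto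
  finally have "y ^ 3 / M ^ 2 \<le> (14 * M ^ 3 * a ^ 3 + 4 * b ^ 3) / M ^ 2"
    using assms by (simp add: divide_right_mono)
  also have "\<dots> = 14 * M * a ^ 3 + 4 / M ^ 2 * b ^ 3"
    using assms by (simp add: field_simps power2_eq_square power3_eq_cube)
  finally show ?thesis .
qed

theorem mainTheorem3:
  fixes f :: "real^'n \<Rightarrow> real" and Df :: "real^'n \<Rightarrow> real^'n"
    and Hf :: "real^'n \<Rightarrow> real^'n^'n"
    and x g xp :: "real^'n" and H :: "real^'n^'n" and L M :: real
  assumes "twice_diff_with f Df Hf"
    and "hessian_lipschitz Hf L"
    and "transpose H = H"
    and "M > 0" and "M \<ge> L"
    and "\<forall>y. Omega M g H xp x \<le> Omega M g H y x"
  shows "(- lambda_min (Hf xp)) ^ 3 / M ^ 2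
           \<le> 14 * M * norm (xp - x) ^ 3 + 4 / M ^ 2 * spec_norm (Hf x - H) ^ 3"
proof -
  define r where "r = norm (xp - x)"
  define \<delta> where "\<delta> = spec_norm (Hf x - H)"
  have min: "cubic_model g H M (xp - x) \<le> cubic_model g H M d" for d
    using assms(6)[rule_format, of "x + d"] by (simp add: Omega_eq_cubic_model)
  have model: "- (M/2 * r * norm w ^ 2) \<le> (H *v w) \<bullet> w" for w
    using cubic_model_minimizer_second_order[OF inner_matrix_symmetric[OF assms(3)] min, of w]
    unfolding r_def by linarith
  have lipschitz: "spec_norm (Hf xp - Hf x) \<le> M * r"
    using assms(2,5) unfolding hessian_lipschitz_def r_def by (meson mult_right_mono norm_ge_zero order_trans)
  have "- (3/2 * M * r + \<delta>) \<le> lambda_min (Hf xp)"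
  proof (rule lambda_min_ge[OF hessian_symmetric[OF assms(1)]])
    fix w
    have "(Hf xp *v w) \<bullet> w = (H *v w) \<bullet> w + ((Hf x - H) *v w) \<bullet> w + ((Hf xp - Hf x) *v w) \<bullet> w"
      by (simp add: matrix_vector_mult_diff_rdistrib inner_diff_left)
    moreover have "\<bar>((Hf xp - Hf x) *v w) \<bullet> w\<bar> \<le> M * r * norm w ^ 2"
      using abs_quadratic_form_le_spec_norm[of "Hf xp - Hf x" w] lipschitz
      by (meson mult_right_mono order_trans zero_le_power2)
    ultimately show "- (3/2 * M * r + \<delta>) * norm w ^ 2 \<le> (Hf xp *v w) \<bullet> w"
      using model[of w] abs_quadratic_form_le_spec_norm[of "Hf x - H" w] unfolding \<delta>_def
      by (simp add: algebra_simps abs_le_iff)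
  qed
  then show ?thesis
    unfolding r_def \<delta>_def by (intro cube_div_square_le) (auto simp: spec_norm_nonneg assms(4))
qed

end
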